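(* Let $(X,\le)$ be a partially ordered set such that $\widehat D$ is directed for every directed $D\subset X$, and let $(\overline X,\iota)$ be its directed completion. Then: (1) $\iota(X)^\uparrow=\overline X$, where for $A\subset\overline X$, $A^\uparrow$ denotes the set of suprema of directed subsets of $A$; (2) a directed completion of $X$ is given by $\{A\subset X:\ A=\widehat A\text{ and }A\text{ is directed}\}$ ordered by inclusion, together with the map $x\mapsto\downarrow x$; (3) if $(Y,\le)$ is a dcpo and $j:X\to Y$ a map, then $(Y,j)$ is a directed completion of $X$ if and only if $j(X)$ is dense in $Y$ and for every directed $B\subset X$ and every $a\in X$ we have $j(a)\in\widehat{j(B)}$ (in $Y$) if and only if $a\in\widehat B$ (in $X$).
   Context: Let $(X,\le)$ be a partially ordered set. A subset $D\subset X$ is directed if every finite subset of $D$ (including the empty one) has an upper bound in $D$; in particular directed sets are nonempty. $A\subset X$ is a lower set if $x\in A$ and $y\le x$ imply $y\in A$; $\downarrow a:=\{x\in X:x\le a\}$. $(X,\le)$ is a directed complete partial order (dcpo) if every directed subset has a supremum. A subset $A\subset X$ is directed-sup-closed if the supremum of every directed $D\subset A$ which has a supremum in $X$ belongs to $A$. For $A\subset X$, $\overline A$ is the smallest directed-sup-closed subset of $X$ containing $A$, and $\widehat A$ is the smallest subset of $X$ containing $A$ which is both a lower set and directed-sup-closed. $A$ is dense if $\overline A=X$. A map $T:X_1\to X_2$ between partially ordered sets has the Monotone Convergence Property (Mcp) if for every directed $D\subset X_1$ having a supremum, $T(D)$ has a supremum and $T(\sup D)=\sup T(D)$. A directed completion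 of $(X,\le)$ is a dcpo $(\overline X,\bar\le)$ together with a map $\iota:X\to\overline X$ with the Mcp such that for every dcpo $Z$ and every map $T:X\to Z$ with the Mcp there is a unique map $\bar T:\overline X\to Z$ with the Mcp satisfying $\bar T\circ\iota=T$. *)

theory Defs
  imports Main
begin

text \<open>A partially ordered set is represented by a carrier set together with a relation
on the ambient type (relativised to the carrier).\<close>

definition poset :: "'a set \<Rightarrow> ('a \<Rightarrow> 'a \<Rightarrow> bool) \<Rightarrow> bool" where
  "poset A le \<longleftrightarrow>
     (\<forall>x\<in>A. le x x) \<and>
     (\<forall>x\<in>A. \<forall>y\<in>A. le x y \<and> le y x \<longrightarrow> x = y) \<and>
     (\<forall>x\<in>A. \<forall>y\<in>A. \<forall>z\<in>A. le x y \<and> le y z \<longrightarrow> le x z)"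

text \<open>Directed: every finite subset (including the empty one) has an upper bound in D.\<close>
definition directed :: "'a set \<Rightarrow> ('a \<Rightarrow> 'a \<Rightarrow> bool) \<Rightarrow> 'a set \<Rightarrow> bool" where
  "directed A le D \<longleftrightarrow> D \<subseteq> A \<and>
     (\<forall>F. finite F \<and> F \<subseteq> D \<longrightarrow> (\<exists>u\<in>D. \<forall>x\<in>F. le x u))"

definition is_sup :: "'a set \<Rightarrow> ('a \<Rightarrow> 'a \<Rightarrow> bool) \<Rightarrow> 'a set \<Rightarrow> 'a \<Rightarrow> bool" where
  "is_sup A le D s \<longleftrightarrow> s \<in> A \<and> (\<forall>x\<in>D. le x s) \<and>
     (\<forall>u\<in>A. (\<forall>x\<in>D. le x u) \<longrightarrow> le s u)"

definition dcpo :: "'a set \<Rightarrow> ('a \<Rightarrow> 'a \<Rightarrow> bool) \<Rightarrow> bool" where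
  "dcpo A le \<longleftrightarrow> poset A le \<and> (\<forall>D. directed A le D \<longrightarrow> (\<exists>s. is_sup A le D s))"

definition lower_set :: "'a set \<Rightarrow> ('a \<Rightarrow> 'a \<Rightarrow> bool) \<Rightarrow> 'a set \<Rightarrow> bool" where
  "lower_set A le S \<longleftrightarrow> S \<subseteq> A \<and> (\<forall>x\<in>S. \<forall>y\<in>A. le y x \<longrightarrow> y \<in> S)"

definition down :: "'a set \<Rightarrow> ('a \<Rightarrow> 'a \<Rightarrow> bool) \<Rightarrow> 'a \<Rightarrow> 'a set" where
  "down A le a = {x \<in> A. le x a}"

definition dsup_closed :: "'a set \<Rightarrow> ('a \<Rightarrow> 'a \<Rightarrow> bool) \<Rightarrow> 'a set \<Rightarrow> bool" where
  "dsup_closed A le S \<longleftrightarrow> S \<subseteq> A \<and>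
     (\<forall>D s. directed A le D \<and> D \<subseteq> S \<and> is_sup A le D s \<longrightarrow> s \<in> S)"

definition dclosure :: "'a set \<Rightarrow> ('a \<Rightarrow> 'a \<Rightarrow> bool) \<Rightarrow> 'a set \<Rightarrow> 'a set" where
  "dclosure A le S = \<Inter>{C. S \<subseteq> C \<and> dsup_closed A le C}"

definition hat :: "'a set \<Rightarrow> ('a \<Rightarrow> 'a \<Rightarrow> bool) \<Rightarrow> 'a set \<Rightarrow> 'a set" where
  "hat A le S = \<Inter>{C. S \<subseteq> C \<and> lower_set A le C \<and> dsup_closed A le C}"

definition dense :: "'a set \<Rightarrow> ('a \<Rightarrow> 'a \<Rightarrow> bool) \<Rightarrow> 'a set \<Rightarrow> bool" where
  "dense A le S \<longleftrightarrow> dclosure A le S = A"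

definition dsups :: "'a set \<Rightarrow> ('a \<Rightarrow> 'a \<Rightarrow> bool) \<Rightarrow> 'a set \<Rightarrow> 'a set" where
  "dsups A le S = {s. \<exists>D. directed A le D \<and> D \<subseteq> S \<and> is_sup A le D s}"

definition mcp :: "'a set \<Rightarrow> ('a \<Rightarrow> 'a \<Rightarrow> bool) \<Rightarrow> 'b set \<Rightarrow> ('b \<Rightarrow> 'b \<Rightarrow> bool)
                   \<Rightarrow> ('a \<Rightarrow> 'b) \<Rightarrow> bool" where
  "mcp A1 le1 A2 le2 T \<longleftrightarrow> T ` A1 \<subseteq> A2 \<and>
     (\<forall>D s. directed A1 le1 D \<and> is_sup A1 le1 D s \<longrightarrow> is_sup A2 le2 (T ` D) (T s))"

text \<open>Directed completion, with the universal property tested against all dcpos Z whose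
carrier lives in the type 'z (HOL cannot quantify over types inside a formula).\<close>
definition directed_completion ::
  "'z itself \<Rightarrow> 'a set \<Rightarrow> ('a \<Rightarrow> 'a \<Rightarrow> bool) \<Rightarrow> 'b set \<Rightarrow> ('b \<Rightarrow> 'b \<Rightarrow> bool)
   \<Rightarrow> ('a \<Rightarrow> 'b) \<Rightarrow> bool" where
  "directed_completion (_ :: 'z itself) X le Xb leb \<iota> \<longleftrightarrow>
     dcpo Xb leb \<and> mcp X le Xb leb \<iota> \<and>
     (\<forall>(Z :: 'z set) leZ T. dcpo Z leZ \<and> mcp X le Z leZ T \<longrightarrow>
        (\<exists>Tb. mcp Xb leb Z leZ Tb \<and> (\<forall>x\<in>X. Tb (\<iota> x) = T x) \<and>
           (\<forall>Tb'. mcp Xb leb Z leZ Tb' \<and> (\<forall>x\<in>X. Tb' (\<iota> x) = T x) \<longrightarrow>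
                  (\<forall>y\<in>Xb. Tb' y = Tb y))))"

end

theory Submission
  imports Defs
begin

text \<open>
  Lower, directed-sup-closed sets are the Scott-closed sets, and \<open>hat X le S\<close> is the Scott
  closure of \<open>S\<close>. Call an Mcp map \<open>j\<close> of \<open>X\<close> into a dcpo \<open>Y\<close> a hat embedding if its image is
  dense and \<open>j a\<close> lies in the closure of \<open>j ` B\<close> only if \<open>a\<close> lies in the closure of \<open>B\<close>
  (\<open>B\<close> directed). For such \<open>j\<close>, the points of \<open>X\<close> mapped below \<open>y = sup j(B)\<close> form exactly the
  closure of \<open>B\<close>, which is directed by the hypothesis on \<open>X\<close>; the points \<open>y\<close> that are the
  supremum of the image of the points below them form a directed-sup-closed set containing
  \<open>j ` X\<close>, hence all of \<open>Y\<close>. An Mcp map \<open>T\<close> therefore extends uniquely by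
  \<open>y \<mapsto> sup T(below y)\<close>, and every hat embedding is a directed completion. This gives the
  "if" half of part (3) and, applied to \<open>x \<mapsto> down x\<close> into the directed Scott-closed sets,
  part (2). Conversely, a directed completion is dense, because the directed-sup closure of
  \<open>j ` X\<close> is itself a dcpo and the extension of \<open>j\<close> into it must be the identity, and it
  reflects closures, because a Scott-closed set is the preimage of the bottom point under an Mcp
  map into the two-point dcpo. Part (1) is the approximation of each \<open>y\<close> by the points below it.
\<close>

lemma
  assumes "poset A le"
  shows poset_refl: "x \<in> A \<Longrightarrow> le x x"
    and poset_antisym: "x \<in> A \<Longrightarrow> y \<in> A \<Longrightarrow> le x y \<Longrightarrow> le y x \<Longrightarrow> x = y"
    and poset_trans: "x \<in> A \<Longrightarrow> y \<in> A \<Longrightarrow> z \<in> A \<Longrightarrow> le x y \<Longrightarrow> le y z \<Longrightarrow> le x z"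
  using assms unfolding poset_def by blast+

lemma poset_subset: "poset A le \<Longrightarrow> C \<subseteq> A \<Longrightarrow> poset C le"
  unfolding poset_def by blast

lemma dcpo_poset: "dcpo A le \<Longrightarrow> poset A le"
  unfolding dcpo_def by blast

lemma directed_subset: "directed A le D \<Longrightarrow> D \<subseteq> A"
  unfolding directed_def by blast

lemma directed_nonempty: "directed A le D \<Longrightarrow> D \<noteq> {}"
  unfolding directed_def by (metis empty_iff empty_subsetI finite.emptyI)

lemma directed_pair:
  assumes "directed A le D" "x \<in> D" "y \<in> D"
  obtains z where "z \<in> D" "le x z" "le y z"
  using assms unfolding directed_def by (metis finite.emptyI finite.insertI insert_iff
      insert_subset empty_subsetI)

lemma directed_carrier_mono: "directed C le D \<Longrightarrow> C \<subseteq> A \<Longrightarrow> directed A le D"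
  unfolding directed_def by blast

lemma directedI:
  assumes "poset A le" "D \<subseteq> A" "D \<noteq> {}"
    and pair: "\<And>x y. x \<in> D \<Longrightarrow> y \<in> D \<Longrightarrow> \<exists>z\<in>D. le x z \<and> le y z"
  shows "directed A le D"
proof -
  have "\<exists>u\<in>D. \<forall>x\<in>F. le x u" if "finite F" "F \<subseteq> D" for F
    using that
  proof (induction F rule: finite_induct)
    case empty
    then show ?case using \<open>D \<noteq> {}\<close> by blast
  next
    case (insert x F)
    then obtain u where u: "u \<in> D" "\<forall>y\<in>F. le y u" by blast
    obtain z where z: "z \<in> D" "le x z" "le u z" using pair[of x u] insert.prems u by blast
    have "le y z" if "y \<in> F" for y
      using poset_trans[OF assms(1)] u z that insert.prems \<open>D \<subseteq> A\<close> by blast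
    then show ?case using z by blast
  qed
  then show ?thesis using \<open>D \<subseteq> A\<close> unfolding directed_def by blast
qed

lemma directed_singleton: "poset A le \<Longrightarrow> x \<in> A \<Longrightarrow> directed A le {x}"
  by (rule directedI) (auto dest: poset_refl)

lemma directed_image:
  assumes "poset B leB" "directed A le D" "f ` D \<subseteq> B"
    and mono: "\<And>x y. x \<in> D \<Longrightarrow> y \<in> D \<Longrightarrow> le x y \<Longrightarrow> leB (f x) (f y)"
  shows "directed B leB (f ` D)"
proof (rule directedI[OF assms(1,3)])
  show "f ` D \<noteq> {}" using directed_nonempty[OF assms(2)] by blast
  fix x y assume "x \<in> f ` D" "y \<in> f ` D"
  then obtain a b where "a \<in> D" "b \<in> D" "x = f a" "y = f b" by blast
  moreover obtain c where "c \<in> D" "le a c" "le b c"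
    using directed_pair[OF assms(2) \<open>a \<in> D\<close> \<open>b \<in> D\<close>] .
  ultimately show "\<exists>z\<in>f ` D. leB x z \<and> leB y z" using mono by blast
qed

lemma directed_Union:
  assumes "poset A le" "F \<noteq> {}" "\<And>D. D \<in> F \<Longrightarrow> directed A le D"
    and bounded: "\<And>D E. D \<in> F \<Longrightarrow> E \<in> F \<Longrightarrow> \<exists>G\<in>F. D \<subseteq> G \<and> E \<subseteq> G"
  shows "directed A le (\<Union>F)"
proof (rule directedI[OF assms(1)])
  show "\<Union>F \<subseteq> A" using assms(3) directed_subset by blast
  show "\<Union>F \<noteq> {}" using assms(2,3) directed_nonempty by blast
  fix x y assume "x \<in> \<Union>F" "y \<in> \<Union>F"
  then obtain D E where "D \<in> F" "E \<in> F" "x \<in> D" "y \<in> E" by blast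
  then obtain G where "G \<in> F" "x \<in> G" "y \<in> G" using bounded by blast
  then show "\<exists>z\<in>\<Union>F. le x z \<and> le y z"
    using directed_pair[OF assms(3)] by (metis UnionI)
qed

definition upper_bounds :: "'a set \<Rightarrow> ('a \<Rightarrow> 'a \<Rightarrow> bool) \<Rightarrow> 'a set \<Rightarrow> 'a set" where
  "upper_bounds A le S = {u \<in> A. \<forall>x\<in>S. le x u}"

lemma is_sup_upper_bounds:
  "is_sup A le S s \<longleftrightarrow> s \<in> upper_bounds A le S \<and> (\<forall>u\<in>upper_bounds A le S. le s u)"
  unfolding is_sup_def upper_bounds_def by blast

lemma is_sup_cong_upper_bounds:
  "upper_bounds A le S = upper_bounds A le S' \<Longrightarrow> is_sup A le S s \<longleftrightarrow> is_sup A le S' s"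
  unfolding is_sup_upper_bounds by simp

lemma upper_bounds_UN:
  assumes "poset A le" and sup: "\<And>i. i \<in> I \<Longrightarrow> F i \<subseteq> A \<and> is_sup A le (F i) (f i)"
  shows "upper_bounds A le (\<Union>i\<in>I. F i) = upper_bounds A le (f ` I)"
proof -
  have "(\<forall>x\<in>\<Union>i\<in>I. F i. le x u) \<longleftrightarrow> (\<forall>i\<in>I. le (f i) u)" if "u \<in> A" for u
  proof (intro iffI ballI)
    fix i assume "\<forall>x\<in>\<Union>i\<in>I. F i. le x u" "i \<in> I"
    then show "le (f i) u" using sup[of i] \<open>u \<in> A\<close> unfolding is_sup_def by blast
  next
    fix x assume "\<forall>i\<in>I. le (f i) u" "x \<in> (\<Union>i\<in>I. F i)"
    then obtain i where "i \<in> I" "x \<in> F i" "le (f i) u" by blast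
    moreover have "x \<in> A" "f i \<in> A" "le x (f i)"
      using sup[OF \<open>i \<in> I\<close>] \<open>x \<in> F i\<close> unfolding is_sup_def by blast+
    ultimately show "le x u" using poset_trans[OF assms(1)] \<open>u \<in> A\<close> by blast
  qed
  then show ?thesis unfolding upper_bounds_def by auto
qed

lemma is_sup_unique: "poset A le \<Longrightarrow> is_sup A le D s \<Longrightarrow> is_sup A le D t \<Longrightarrow> s = t"
  unfolding is_sup_def by (blast intro: poset_antisym)

lemma is_sup_singleton: "poset A le \<Longrightarrow> x \<in> A \<Longrightarrow> is_sup A le {x} x"
  unfolding is_sup_def by (blast intro: poset_refl)

lemma is_sup_subset_carrier: "is_sup A le D s \<Longrightarrow> s \<in> C \<Longrightarrow> C \<subseteq> A \<Longrightarrow> is_sup C le D s"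
  unfolding is_sup_def by blast

definition supr :: "'a set \<Rightarrow> ('a \<Rightarrow> 'a \<Rightarrow> bool) \<Rightarrow> 'a set \<Rightarrow> 'a" where
  "supr A le D = (SOME s. is_sup A le D s)"

lemma is_sup_supr: "dcpo A le \<Longrightarrow> directed A le D \<Longrightarrow> is_sup A le D (supr A le D)"
  unfolding dcpo_def supr_def by (metis someI_ex)

lemma mcp_into: "mcp X le Y leY f \<Longrightarrow> x \<in> X \<Longrightarrow> f x \<in> Y"
  unfolding mcp_def by blast

lemma mcp_is_sup: "mcp X le Y leY f \<Longrightarrow> directed X le D \<Longrightarrow> is_sup X le D s \<Longrightarrow> is_sup Y leY (f ` D) (f s)"
  unfolding mcp_def by blast

lemma mcp_mono:
  assumes "poset X le" "mcp X le Y leY f" "x \<in> X" "y \<in> X" "le x y"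
  shows "leY (f x) (f y)"
proof -
  have "directed X le {x, y}"
    using assms by (intro directedI) (auto dest: poset_refl)
  moreover have "is_sup X le {x, y} y"
    using assms unfolding is_sup_def by (auto dest: poset_refl)
  ultimately show ?thesis
    using mcp_is_sup[OF assms(2)] unfolding is_sup_def by blast
qed

lemma mcp_directed:
  assumes "poset X le" "poset Y leY" "mcp X le Y leY f" "directed X le D"
  shows "directed Y leY (f ` D)"
proof (rule directed_image[OF assms(2,4)])
  show "f ` D \<subseteq> Y" using directed_subset[OF assms(4)] mcp_into[OF assms(3)] by blast
  show "leY (f x) (f y)" if "x \<in> D" "y \<in> D" "le x y" for x y
    using that directed_subset[OF assms(4)] mcp_mono[OF assms(1,3)] by blast
qed

lemma mcp_cong: "(\<And>x. x \<in> X \<Longrightarrow> f x = g x) \<Longrightarrow> mcp X le Y leY f \<longleftrightarrow> mcp X le Y leY g"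
proof -
  assume eq: "\<And>x. x \<in> X \<Longrightarrow> f x = g x"
  have "f ` D = g ` D" if "directed X le D" for D
    using directed_subset[OF that] eq by (intro image_cong) blast+
  moreover have "f s = g s" if "is_sup X le D s" for D s
    using that eq unfolding is_sup_def by blast
  moreover have "f ` X = g ` X" using eq by (rule image_cong[OF refl])
  ultimately show ?thesis unfolding mcp_def by (metis (no_types, lifting))
qed

lemma mcp_id: "mcp X le X le (\<lambda>x. x)"
  unfolding mcp_def by simp

subsection \<open>Scott-closed sets and the closures\<close>

definition scott_closed :: "'a set \<Rightarrow> ('a \<Rightarrow> 'a \<Rightarrow> bool) \<Rightarrow> 'a set \<Rightarrow> bool" where
  "scott_closed A le C \<longleftrightarrow> lower_set A le C \<and> dsup_closed A le C"

lemma scott_closed_lowerD: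
  "scott_closed A le C \<Longrightarrow> x \<in> C \<Longrightarrow> y \<in> A \<Longrightarrow> le y x \<Longrightarrow> y \<in> C"
  unfolding scott_closed_def lower_set_def by blast

lemma scott_closed_dsupD:
  "scott_closed A le C \<Longrightarrow> directed A le D \<Longrightarrow> D \<subseteq> C \<Longrightarrow> is_sup A le D s \<Longrightarrow> s \<in> C"
  unfolding scott_closed_def dsup_closed_def by blast

lemma scott_closed_subset: "scott_closed A le C \<Longrightarrow> C \<subseteq> A"
  unfolding scott_closed_def lower_set_def by blast

lemma scott_closedI:
  assumes "C \<subseteq> A" "\<And>x y. x \<in> C \<Longrightarrow> y \<in> A \<Longrightarrow> le y x \<Longrightarrow> y \<in> C"
    "\<And>D s. directed A le D \<Longrightarrow> D \<subseteq> C \<Longrightarrow> is_sup A le D s \<Longrightarrow> s \<in> C"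
  shows "scott_closed A le C"
  using assms unfolding scott_closed_def lower_set_def dsup_closed_def by blast

lemma dsup_closed_Inter:
  assumes "F \<noteq> {}" "\<And>C. C \<in> F \<Longrightarrow> dsup_closed A le C"
  shows "dsup_closed A le (\<Inter>F)"
  unfolding dsup_closed_def
proof (intro conjI allI impI)
  obtain C where "C \<in> F" using assms(1) by blast
  then show "\<Inter>F \<subseteq> A" using assms(2) unfolding dsup_closed_def by blast
  fix D s assume "directed A le D \<and> D \<subseteq> \<Inter>F \<and> is_sup A le D s"
  then have "s \<in> C" if "C \<in> F" for C
    using assms(2)[OF that] that unfolding dsup_closed_def by blast
  then show "s \<in> \<Inter>F" by blast
qed

lemma lower_set_Inter:
  assumes "F \<noteq> {}" "\<And>C. C \<in> F \<Longrightarrow> lower_set A le C"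
  shows "lower_set A le (\<Inter>F)"
  unfolding lower_set_def
proof (intro conjI ballI impI)
  obtain C where "C \<in> F" using assms(1) by blast
  then show "\<Inter>F \<subseteq> A" using assms(2) unfolding lower_set_def by blast
  fix x y assume "x \<in> \<Inter>F" "y \<in> A" "le y x"
  then have "y \<in> C" if "C \<in> F" for C
    using assms(2)[OF that] that unfolding lower_set_def by blast
  then show "y \<in> \<Inter>F" by blast
qed

lemma scott_closed_Inter:
  "F \<noteq> {} \<Longrightarrow> (\<And>C. C \<in> F \<Longrightarrow> scott_closed A le C) \<Longrightarrow> scott_closed A le (\<Inter>F)"
  unfolding scott_closed_def by (simp add: dsup_closed_Inter lower_set_Inter)

lemma scott_closed_carrier: "scott_closed A le A"
  unfolding scott_closed_def lower_set_def dsup_closed_def is_sup_def by blast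

lemma hat_scott: "hat A le S = \<Inter>{C. S \<subseteq> C \<and> scott_closed A le C}"
  unfolding hat_def scott_closed_def by simp

lemma hat_subset: "S \<subseteq> hat A le S"
  unfolding hat_scott by blast

lemma hat_least: "S \<subseteq> C \<Longrightarrow> scott_closed A le C \<Longrightarrow> hat A le S \<subseteq> C"
  unfolding hat_scott by blast

lemma scott_closed_hat: "S \<subseteq> A \<Longrightarrow> scott_closed A le (hat A le S)"
  unfolding hat_scott using scott_closed_carrier by (intro scott_closed_Inter) blast+

lemma hat_carrier: "S \<subseteq> A \<Longrightarrow> hat A le S \<subseteq> A"
  by (rule hat_least[OF _ scott_closed_carrier])

lemma hat_scott_closed: "scott_closed A le C \<Longrightarrow> hat A le C = C"
  using hat_least[of C C] hat_subset[of C] by blast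

lemma dclosure_subset: "S \<subseteq> dclosure A le S"
  unfolding dclosure_def by blast

lemma dclosure_least: "S \<subseteq> C \<Longrightarrow> dsup_closed A le C \<Longrightarrow> dclosure A le S \<subseteq> C"
  unfolding dclosure_def by blast

lemma dsup_closed_carrier: "dsup_closed A le A"
  using scott_closed_carrier unfolding scott_closed_def by blast

lemma dsup_closed_dclosure: "S \<subseteq> A \<Longrightarrow> dsup_closed A le (dclosure A le S)"
  unfolding dclosure_def using dsup_closed_carrier by (intro dsup_closed_Inter) blast+

lemma dclosure_carrier: "S \<subseteq> A \<Longrightarrow> dclosure A le S \<subseteq> A"
  by (rule dclosure_least[OF _ dsup_closed_carrier])

lemma denseD: "dense A le S \<Longrightarrow> S \<subseteq> C \<Longrightarrow> dsup_closed A le C \<Longrightarrow> A \<subseteq> C"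
  unfolding dense_def using dclosure_least by blast

lemma scott_closed_down:
  assumes "poset A le" "a \<in> A"
  shows "scott_closed A le (down A le a)"
proof (rule scott_closedI)
  show "down A le a \<subseteq> A" unfolding down_def by blast
  show "y \<in> down A le a" if "x \<in> down A le a" "y \<in> A" "le y x" for x y
    using that poset_trans[OF assms(1), of y x a] assms(2) unfolding down_def by blast
  show "s \<in> down A le a" if "is_sup A le D s" "D \<subseteq> down A le a" for D s
    using that assms(2) unfolding is_sup_def down_def by blast
qed

lemma in_hat_if_le_sup:
  assumes "poset A le" "directed A le D" "is_sup A le D s" "x \<in> A" "le x s"
  shows "x \<in> hat A le D"
proof -
  have DA: "D \<subseteq> A" using directed_subset[OF assms(2)] .
  have "s \<in> hat A le D"
    using scott_closed_dsupD[OF scott_closed_hat[OF DA] assms(2) hat_subset assms(3)] .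
  then show ?thesis
    using scott_closed_lowerD[OF scott_closed_hat[OF DA, of le] _ assms(4,5)] by blast
qed

lemma scott_closed_vimage:
  assumes "poset X le" "poset Y leY" "mcp X le Y leY f" "scott_closed Y leY C"
  shows "scott_closed X le {x \<in> X. f x \<in> C}"
proof (rule scott_closedI)
  fix x y assume x: "x \<in> {x \<in> X. f x \<in> C}" and "y \<in> X" "le y x"
  then have "leY (f y) (f x)" using mcp_mono[OF assms(1,3)] by blast
  then have "f y \<in> C"
    using scott_closed_lowerD[OF assms(4)] x mcp_into[OF assms(3) \<open>y \<in> X\<close>] by blast
  then show "y \<in> {x \<in> X. f x \<in> C}" using \<open>y \<in> X\<close> by blast
next
  fix D s assume D: "directed X le D" "D \<subseteq> {x \<in> X. f x \<in> C}" and s: "is_sup X le D s"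
  have "f s \<in> C"
    using scott_closed_dsupD[OF assms(4) mcp_directed[OF assms(1-3) D(1)] _ mcp_is_sup[OF assms(3) D(1) s]]
      D(2) by blast
  then show "s \<in> {x \<in> X. f x \<in> C}" using s unfolding is_sup_def by blast
qed simp

lemma hat_image_subset:
  assumes "poset X le" "poset Y leY" "mcp X le Y leY f" "S \<subseteq> X"
  shows "f ` hat X le S \<subseteq> hat Y leY (f ` S)"
proof -
  have "f ` S \<subseteq> Y" using mcp_into[OF assms(3)] assms(4) by blast
  then have "scott_closed X le {x \<in> X. f x \<in> hat Y leY (f ` S)}"
    by (rule scott_closed_vimage[OF assms(1-3) scott_closed_hat])
  moreover have "S \<subseteq> {x \<in> X. f x \<in> hat Y leY (f ` S)}"
    using assms(4) hat_subset[of "f ` S"] by blast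
  ultimately have "hat X le S \<subseteq> {x \<in> X. f x \<in> hat Y leY (f ` S)}"
    by (rule hat_least[rotated])
  then show ?thesis by blast
qed

lemma upper_bounds_image_hat:
  assumes "poset X le" "poset Y leY" "mcp X le Y leY f" "S \<subseteq> X"
  shows "upper_bounds Y leY (f ` hat X le S) = upper_bounds Y leY (f ` S)"
proof -
  have "f ` hat X le S \<subseteq> down Y leY u" if u: "u \<in> upper_bounds Y leY (f ` S)" for u
  proof -
    have "f ` S \<subseteq> down Y leY u"
      using u mcp_into[OF assms(3)] assms(4) unfolding upper_bounds_def down_def by blast
    moreover have "scott_closed Y leY (down Y leY u)"
      using scott_closed_down[OF assms(2)] u unfolding upper_bounds_def by blast
    ultimately have "hat Y leY (f ` S) \<subseteq> down Y leY u" by (rule hat_least)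
    then show ?thesis using hat_image_subset[OF assms] by blast
  qed
  then have "upper_bounds Y leY (f ` S) \<subseteq> upper_bounds Y leY (f ` hat X le S)"
    unfolding upper_bounds_def down_def by blast
  moreover have "upper_bounds Y leY (f ` hat X le S) \<subseteq> upper_bounds Y leY (f ` S)"
    using hat_subset[of S X le] unfolding upper_bounds_def by blast
  ultimately show ?thesis by blast
qed

lemma hat_subset_down:
  assumes "poset A le" "S \<subseteq> A" "is_sup A le S s"
  shows "hat A le S \<subseteq> down A le s"
proof (rule hat_least)
  show "S \<subseteq> down A le s" using assms(2,3) unfolding is_sup_def down_def by blast
  show "scott_closed A le (down A le s)"
    using scott_closed_down[OF assms(1)] assms(3) unfolding is_sup_def by blast
qed

lemma mcp_comp:
  assumes "poset X le" "poset Y leY" "mcp X le Y leY f" "mcp Y leY Z leZ g"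
  shows "mcp X le Z leZ (\<lambda>x. g (f x))"
  unfolding mcp_def
proof (intro conjI allI impI)
  show "(\<lambda>x. g (f x)) ` X \<subseteq> Z" using mcp_into[OF assms(3)] mcp_into[OF assms(4)] by blast
  fix D s assume "directed X le D \<and> is_sup X le D s"
  then have "is_sup Z leZ (g ` f ` D) (g (f s))"
    using mcp_is_sup[OF assms(4) mcp_directed[OF assms(1-3)] mcp_is_sup[OF assms(3)]] by blast
  then show "is_sup Z leZ ((\<lambda>x. g (f x)) ` D) (g (f s))" by (simp add: image_image)
qed

subsection \<open>Hat-reflecting dense embeddings\<close>

locale hat_directed_poset =
  fixes X :: "'a set" and le :: "'a \<Rightarrow> 'a \<Rightarrow> bool"
  assumes poset_X: "poset X le"
    and directed_hat: "\<And>D. directed X le D \<Longrightarrow> directed X le (hat X le D)"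

locale hat_embedding = hat_directed_poset X le
  for X :: "'a set" and le :: "'a \<Rightarrow> 'a \<Rightarrow> bool" +
  fixes Y :: "'b set" and leY :: "'b \<Rightarrow> 'b \<Rightarrow> bool" and j :: "'a \<Rightarrow> 'b"
  assumes dcpo_Y: "dcpo Y leY"
    and mcp_j: "mcp X le Y leY j"
    and dense_j: "dense Y leY (j ` X)"
    and hat_reflect: "\<And>B a. directed X le B \<Longrightarrow> a \<in> X \<Longrightarrow> j a \<in> hat Y leY (j ` B) \<Longrightarrow> a \<in> hat X le B"
begin

lemma poset_Y: "poset Y leY"
  using dcpo_poset[OF dcpo_Y] .

definition below :: "'b \<Rightarrow> 'a set" where
  "below y = {a \<in> X. leY (j a) y}"

lemma below_subset: "below y \<subseteq> X"
  unfolding below_def by blast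

lemma scott_closed_below: "y \<in> Y \<Longrightarrow> scott_closed X le (below y)"
proof -
  assume "y \<in> Y"
  have "below y = {a \<in> X. j a \<in> down Y leY y}"
    unfolding below_def down_def using mcp_into[OF mcp_j] by blast
  then show ?thesis
    using scott_closed_vimage[OF poset_X poset_Y mcp_j scott_closed_down[OF poset_Y \<open>y \<in> Y\<close>]] by simp
qed

lemma below_mono: "leY y z \<Longrightarrow> y \<in> Y \<Longrightarrow> z \<in> Y \<Longrightarrow> below y \<subseteq> below z"
  unfolding below_def using poset_trans[OF poset_Y] mcp_into[OF mcp_j] by blast

lemma below_eq_hat:
  assumes B: "directed X le B" and y: "is_sup Y leY (j ` B) y"
  shows "below y = hat X le B"
proof
  have "y \<in> Y" "B \<subseteq> below y"
    using y directed_subset[OF B] unfolding is_sup_def below_def by blast+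
  then show "hat X le B \<subseteq> below y"
    using hat_least scott_closed_below by blast
  show "below y \<subseteq> hat X le B"
  proof
    fix a assume "a \<in> below y"
    then have "a \<in> X" "leY (j a) y" unfolding below_def by blast+
    then have "j a \<in> hat Y leY (j ` B)"
      using in_hat_if_le_sup[OF poset_Y mcp_directed[OF poset_X poset_Y mcp_j B] y]
        mcp_into[OF mcp_j] by blast
    then show "a \<in> hat X le B" using hat_reflect[OF B \<open>a \<in> X\<close>] by blast
  qed
qed

definition approximated :: "'b \<Rightarrow> bool" where
  "approximated y \<longleftrightarrow> directed X le (below y) \<and> is_sup Y leY (j ` below y) y"

lemma approximatedI:
  assumes B: "directed X le B" and y: "is_sup Y leY (j ` B) y"
  shows "approximated y"
proof -
  have eq: "below y = hat X le B" using below_eq_hat[OF B y] .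
  have "upper_bounds Y leY (j ` below y) = upper_bounds Y leY (j ` B)"
    unfolding eq using upper_bounds_image_hat[OF poset_X poset_Y mcp_j directed_subset[OF B]] .
  then show ?thesis
    unfolding approximated_def using directed_hat[OF B] eq y is_sup_cong_upper_bounds by metis
qed

lemma approximated_image: "x \<in> X \<Longrightarrow> approximated (j x)"
  using approximatedI[OF directed_singleton[OF poset_X], of x] is_sup_singleton[OF poset_Y]
    mcp_into[OF mcp_j] by simp

lemma
  assumes D: "directed Y leY D" and approx: "\<And>d. d \<in> D \<Longrightarrow> approximated d"
  shows directed_UN_below: "directed X le (\<Union>d\<in>D. below d)"
    and is_sup_UN_below: "is_sup Y leY D s \<Longrightarrow> is_sup Y leY (j ` (\<Union>d\<in>D. below d)) s"
proof -
  have DY: "D \<subseteq> Y" using directed_subset[OF D] .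
  show "directed X le (\<Union>d\<in>D. below d)"
  proof (rule directed_Union[OF poset_X])
    show "below ` D \<noteq> {}" using directed_nonempty[OF D] by blast
    show "directed X le E" if "E \<in> below ` D" for E
      using that approx unfolding approximated_def by blast
    fix E F assume "E \<in> below ` D" "F \<in> below ` D"
    then obtain d e where "d \<in> D" "e \<in> D" "E = below d" "F = below e" by blast
    moreover obtain f where "f \<in> D" "leY d f" "leY e f"
      using directed_pair[OF D \<open>d \<in> D\<close> \<open>e \<in> D\<close>] .
    ultimately show "\<exists>G\<in>below ` D. E \<subseteq> G \<and> F \<subseteq> G"
      using below_mono DY by blast
  qed
  assume s: "is_sup Y leY D s"
  have "upper_bounds Y leY (\<Union>d\<in>D. j ` below d) = upper_bounds Y leY ((\<lambda>d. d) ` D)"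
    using approx below_subset mcp_into[OF mcp_j] unfolding approximated_def
    by (intro upper_bounds_UN[OF poset_Y]) blast
  then show "is_sup Y leY (j ` (\<Union>d\<in>D. below d)) s"
    using s is_sup_cong_upper_bounds by (metis image_UN image_ident)
qed

lemma approximated:
  assumes "y \<in> Y"
  shows "approximated y"
proof -
  have "dsup_closed Y leY {y \<in> Y. approximated y}"
    unfolding dsup_closed_def
  proof (intro conjI allI impI)
    fix D s assume "directed Y leY D \<and> D \<subseteq> {y \<in> Y. approximated y} \<and> is_sup Y leY D s"
    then have "approximated s"
      using approximatedI[OF directed_UN_below is_sup_UN_below] by blast
    then show "s \<in> {y \<in> Y. approximated y}"
      using \<open>directed Y leY D \<and> _\<close> unfolding is_sup_def by blast
  qed blast
  moreover have "j ` X \<subseteq> {y \<in> Y. approximated y}"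
    using approximated_image mcp_into[OF mcp_j] by blast
  ultimately show ?thesis
    using denseD[OF dense_j] assms by blast
qed

lemma dsups_image: "dsups Y leY (j ` X) = Y"
proof
  show "dsups Y leY (j ` X) \<subseteq> Y" unfolding dsups_def is_sup_def by blast
  show "Y \<subseteq> dsups Y leY (j ` X)"
  proof
    fix y assume "y \<in> Y"
    then have "directed X le (below y)" "is_sup Y leY (j ` below y) y"
      using approximated unfolding approximated_def by blast+
    then show "y \<in> dsups Y leY (j ` X)"
      unfolding dsups_def using mcp_directed[OF poset_X poset_Y mcp_j] below_subset by blast
  qed
qed

definition extension :: "'z set \<Rightarrow> ('z \<Rightarrow> 'z \<Rightarrow> bool) \<Rightarrow> ('a \<Rightarrow> 'z) \<Rightarrow> 'b \<Rightarrow> 'z" where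
  "extension Z leZ T y = supr Z leZ (T ` below y)"

context
  fixes Z :: "'z set" and leZ :: "'z \<Rightarrow> 'z \<Rightarrow> bool" and T :: "'a \<Rightarrow> 'z"
  assumes dcpo_Z: "dcpo Z leZ" and mcp_T: "mcp X le Z leZ T"
begin

lemma poset_Z: "poset Z leZ"
  using dcpo_poset[OF dcpo_Z] .

lemma is_sup_extension: "y \<in> Y \<Longrightarrow> is_sup Z leZ (T ` below y) (extension Z leZ T y)"
  unfolding extension_def using approximated mcp_directed[OF poset_X poset_Z mcp_T]
  by (intro is_sup_supr[OF dcpo_Z]) (auto simp: approximated_def)

lemma extension_in: "y \<in> Y \<Longrightarrow> extension Z leZ T y \<in> Z"
  using is_sup_extension unfolding is_sup_def by blast

lemma upper_bounds_image_below:
  assumes "directed X le B" "is_sup Y leY (j ` B) y"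
  shows "upper_bounds Z leZ (T ` below y) = upper_bounds Z leZ (T ` B)"
  using below_eq_hat[OF assms] upper_bounds_image_hat[OF poset_X poset_Z mcp_T directed_subset[OF assms(1)]]
  by simp

lemma extension_image: "x \<in> X \<Longrightarrow> extension Z leZ T (j x) = T x"
proof -
  assume "x \<in> X"
  have "is_sup Z leZ (T ` below (j x)) (T x)"
    using upper_bounds_image_below[OF directed_singleton[OF poset_X \<open>x \<in> X\<close>]]
      is_sup_singleton[OF poset_Y mcp_into[OF mcp_j \<open>x \<in> X\<close>]]
      is_sup_singleton[OF poset_Z mcp_into[OF mcp_T \<open>x \<in> X\<close>]] is_sup_cong_upper_bounds
    by (metis image_empty image_insert)
  then show ?thesis
    using is_sup_unique[OF poset_Z] is_sup_extension mcp_into[OF mcp_j \<open>x \<in> X\<close>] by blast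
qed

lemma mcp_extension: "mcp Y leY Z leZ (extension Z leZ T)"
  unfolding mcp_def
proof (intro conjI allI impI)
  show "extension Z leZ T ` Y \<subseteq> Z" using extension_in by blast
  fix D s assume "directed Y leY D \<and> is_sup Y leY D s"
  then have D: "directed Y leY D" and s: "is_sup Y leY D s" by blast+
  have approx: "\<And>d. d \<in> D \<Longrightarrow> approximated d"
    using approximated directed_subset[OF D] by blast
  let ?U = "\<Union>d\<in>D. below d"
  have "upper_bounds Z leZ (T ` below s) = upper_bounds Z leZ (T ` ?U)"
    by (rule upper_bounds_image_below[OF directed_UN_below is_sup_UN_below]) (use D approx s in auto)
  also have "\<dots> = upper_bounds Z leZ (extension Z leZ T ` D)"
    unfolding image_UN using is_sup_extension directed_subset[OF D] mcp_into[OF mcp_T] below_subset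
    by (intro upper_bounds_UN[OF poset_Z]) blast
  finally have "is_sup Z leZ (T ` below s) (extension Z leZ T s) \<longleftrightarrow>
      is_sup Z leZ (extension Z leZ T ` D) (extension Z leZ T s)"
    by (rule is_sup_cong_upper_bounds)
  moreover have "s \<in> Y" using s unfolding is_sup_def by blast
  ultimately show "is_sup Z leZ (extension Z leZ T ` D) (extension Z leZ T s)"
    using is_sup_extension by blast
qed

lemma extension_unique:
  assumes S: "mcp Y leY Z leZ S" "\<And>x. x \<in> X \<Longrightarrow> S (j x) = T x" and "y \<in> Y"
  shows "S y = extension Z leZ T y"
proof -
  have below: "directed X le (below y)" "is_sup Y leY (j ` below y) y"
    using approximated[OF \<open>y \<in> Y\<close>] unfolding approximated_def by blast+
  have "S ` j ` below y = T ` below y"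
    unfolding image_image using S(2) below_subset by (intro image_cong) blast+
  then have "is_sup Z leZ (T ` below y) (S y)"
    using mcp_is_sup[OF S(1) mcp_directed[OF poset_X poset_Y mcp_j below(1)] below(2)] by simp
  then show ?thesis
    using is_sup_unique[OF poset_Z] is_sup_extension[OF \<open>y \<in> Y\<close>] by blast
qed

end

lemma directed_completion: "directed_completion TYPE('z) X le Y leY j"
  unfolding directed_completion_def
proof (intro conjI allI impI dcpo_Y mcp_j)
  fix Z :: "'z set" and leZ T assume "dcpo Z leZ \<and> mcp X le Z leZ T"
  then show "\<exists>S. mcp Y leY Z leZ S \<and> (\<forall>x\<in>X. S (j x) = T x) \<and>
      (\<forall>S'. mcp Y leY Z leZ S' \<and> (\<forall>x\<in>X. S' (j x) = T x) \<longrightarrow> (\<forall>y\<in>Y. S' y = S y))"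
    using mcp_extension extension_image extension_unique by blast
qed

end

lemma mcp_if_hat_image_subset:
  assumes "poset X le" "dcpo Y leY" "j ` X \<subseteq> Y"
    and hat_image: "\<And>B. directed X le B \<Longrightarrow> j ` hat X le B \<subseteq> hat Y leY (j ` B)"
  shows "mcp X le Y leY j"
proof -
  have poset_Y: "poset Y leY" using dcpo_poset[OF assms(2)] .
  have le_sup: "leY (j a) t"
    if B: "directed X le B" and "a \<in> hat X le B" "is_sup Y leY (j ` B) t" for B a t
  proof -
    have "j ` B \<subseteq> Y" using directed_subset[OF B] assms(3) by blast
    then have "hat Y leY (j ` B) \<subseteq> down Y leY t" by (rule hat_subset_down[OF poset_Y _ that(3)])
    then show ?thesis using hat_image[OF B] \<open>a \<in> hat X le B\<close> unfolding down_def by blast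
  qed
  have mono: "leY (j x) (j y)" if "x \<in> X" "y \<in> X" "le x y" for x y
  proof -
    have "x \<in> hat X le {y}"
      using in_hat_if_le_sup[OF assms(1) directed_singleton is_sup_singleton] assms(1) that by blast
    moreover have "is_sup Y leY (j ` {y}) (j y)"
      using assms(3) \<open>y \<in> X\<close> by (simp add: is_sup_singleton[OF poset_Y] image_subset_iff)
    ultimately show ?thesis using le_sup[OF directed_singleton[OF assms(1) \<open>y \<in> X\<close>]] by blast
  qed
  show ?thesis
    unfolding mcp_def
  proof (intro conjI allI impI assms(3))
    fix D s assume "directed X le D \<and> is_sup X le D s"
    then have D: "directed X le D" and s: "is_sup X le D s" by blast+
    have DX: "D \<subseteq> X" using directed_subset[OF D] .
    have sX: "s \<in> X" using s unfolding is_sup_def by blast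
    have "directed Y leY (j ` D)"
      by (rule directed_image[OF poset_Y D]) (use DX assms(3) mono in blast)+
    then obtain t where t: "is_sup Y leY (j ` D) t" using assms(2) unfolding dcpo_def by blast
    have "leY (j s) t"
      using le_sup[OF D in_hat_if_le_sup[OF assms(1) D s sX poset_refl[OF assms(1) sX]] t] .
    moreover have "j s \<in> Y" "t \<in> Y" using sX assms(3) t unfolding is_sup_def by blast+
    ultimately have "leY (j s) u" if "u \<in> Y" "\<forall>z\<in>j ` D. leY z u" for u
      using t that poset_trans[OF poset_Y \<open>j s \<in> Y\<close> \<open>t \<in> Y\<close> \<open>u \<in> Y\<close>]
      unfolding is_sup_def by blast
    moreover have "leY (j d) (j s)" if "d \<in> D" for d
      using mono[of d s] s DX sX that unfolding is_sup_def by blast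
    ultimately show "is_sup Y leY (j ` D) (j s)"
      using sX assms(3) unfolding is_sup_def by blast
  qed
qed

lemma (in hat_directed_poset) directed_completion_if_dense_hat_iff:
  assumes "dcpo Y leY" "j ` X \<subseteq> Y" "dense Y leY (j ` X)"
    and "\<And>B a. directed X le B \<Longrightarrow> a \<in> X \<Longrightarrow> j a \<in> hat Y leY (j ` B) \<longleftrightarrow> a \<in> hat X le B"
  shows "directed_completion TYPE('z) X le Y leY j"
proof -
  have "j ` hat X le B \<subseteq> hat Y leY (j ` B)" if "directed X le B" for B
    using assms(4)[OF that] hat_carrier[OF directed_subset[OF that]] by blast
  then interpret hat_embedding X le Y leY j
    using assms mcp_if_hat_image_subset[OF poset_X assms(1,2)] by unfold_locales blast+
  show ?thesis by (rule directed_completion)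
qed

subsection \<open>Properties of a directed completion\<close>

lemma directed_completionD:
  assumes "directed_completion TYPE('z) X le Y leY j"
  shows directed_completion_dcpo: "dcpo Y leY"
    and directed_completion_mcp: "mcp X le Y leY j"
    and directed_completion_extend:
      "\<And>(Z :: 'z set) leZ T. dcpo Z leZ \<Longrightarrow> mcp X le Z leZ T \<Longrightarrow>
         \<exists>S. mcp Y leY Z leZ S \<and> (\<forall>x\<in>X. S (j x) = T x)"
  using assms unfolding directed_completion_def by blast+

lemma directed_completion_unique:
  fixes Z :: "'z set"
  assumes C: "directed_completion TYPE('z) X le Y leY j" and "poset X le" "dcpo Z leZ"
    and S: "mcp Y leY Z leZ S" "mcp Y leY Z leZ S'" and eq: "\<And>x. x \<in> X \<Longrightarrow> S (j x) = S' (j x)"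
    and "y \<in> Y"
  shows "S y = S' y"
proof -
  have poset_Y: "poset Y leY" using dcpo_poset[OF directed_completion_dcpo[OF C]] .
  have "mcp X le Z leZ (\<lambda>x. S (j x))"
    using mcp_comp[OF \<open>poset X le\<close> poset_Y directed_completion_mcp[OF C] S(1)] .
  then obtain R where "\<forall>S'. mcp Y leY Z leZ S' \<and> (\<forall>x\<in>X. S' (j x) = S (j x)) \<longrightarrow> (\<forall>y\<in>Y. S' y = R y)"
    using C \<open>dcpo Z leZ\<close> unfolding directed_completion_def by blast
  then show ?thesis using S eq \<open>y \<in> Y\<close> by (metis (no_types, lifting))
qed

text \<open>The universal property can only be tested against dcpos on \<open>'w set\<close>; a dcpo on \<open>'w\<close> is
  transported there as the dcpo of its singletons.\<close>

definition singletons :: "'a set \<Rightarrow> 'a set set" where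
  "singletons A = (\<lambda>a. {a}) ` A"

definition singleton_le :: "('a \<Rightarrow> 'a \<Rightarrow> bool) \<Rightarrow> 'a set \<Rightarrow> 'a set \<Rightarrow> bool" where
  "singleton_le le P Q \<longleftrightarrow> le (the_elem P) (the_elem Q)"

lemma singleton_le_singleton [simp]: "singleton_le le {a} {b} \<longleftrightarrow> le a b"
  unfolding singleton_le_def by simp

lemma singletonsE:
  assumes "P \<in> singletons A"
  obtains a where "a \<in> A" "P = {a}"
  using assms unfolding singletons_def by blast

lemma is_sup_singletons_iff:
  "is_sup (singletons A) (singleton_le le) ((\<lambda>a. {a}) ` D) {s} \<longleftrightarrow> is_sup A le D s"
  unfolding is_sup_def singletons_def by auto

lemma mcp_singletons_iff:
  "mcp X leX (singletons A) (singleton_le le) (\<lambda>x. {f x}) \<longleftrightarrow> mcp X leX A le f"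
proof -
  have "(\<lambda>x. {f x}) ` D = (\<lambda>a. {a}) ` f ` D" for D by (simp add: image_image)
  then have "is_sup (singletons A) (singleton_le le) ((\<lambda>x. {f x}) ` D) {f s} \<longleftrightarrow>
      is_sup A le (f ` D) (f s)" for D s
    by (simp only: is_sup_singletons_iff)
  moreover have "(\<lambda>x. {f x}) ` X \<subseteq> singletons A \<longleftrightarrow> f ` X \<subseteq> A"
    unfolding singletons_def by blast
  ultimately show ?thesis unfolding mcp_def by simp
qed

lemma dcpo_singletons:
  assumes "dcpo A le"
  shows "dcpo (singletons A) (singleton_le le)"
  unfolding dcpo_def
proof (intro conjI allI impI)
  have poset_A: "poset A le" using dcpo_poset[OF assms] .
  show "poset (singletons A) (singleton_le le)"
    unfolding poset_def
  proof (intro conjI ballI impI)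
    fix P Q R assume "P \<in> singletons A" "Q \<in> singletons A" "R \<in> singletons A"
    then obtain a b c where "a \<in> A" "b \<in> A" "c \<in> A" "P = {a}" "Q = {b}" "R = {c}"
      by (auto elim!: singletonsE)
    then show "singleton_le le P P"
      and "singleton_le le P Q \<and> singleton_le le Q P \<Longrightarrow> P = Q"
      and "singleton_le le P Q \<and> singleton_le le Q R \<Longrightarrow> singleton_le le P R"
      using poset_refl[OF poset_A, of a] poset_antisym[OF poset_A, of a b]
        poset_trans[OF poset_A, of a b c] by simp_all
  qed
  fix P assume P: "directed (singletons A) (singleton_le le) P"
  define D where "D = the_elem ` P"
  have single: "Q = {the_elem Q}" "the_elem Q \<in> A" if "Q \<in> P" for Q
    using directed_subset[OF P] that by (auto elim!: singletonsE)
  have P_eq: "P = (\<lambda>a. {a}) ` D"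
    unfolding D_def image_image using single(1) by (auto simp: image_iff)
  have "D \<subseteq> A" unfolding D_def using single(2) by blast
  have "directed A le D"
  proof (rule directedI[OF poset_A \<open>D \<subseteq> A\<close>])
    show "D \<noteq> {}" using directed_nonempty[OF P] P_eq by blast
    fix a b assume "a \<in> D" "b \<in> D"
    then have "{a} \<in> P" "{b} \<in> P" using P_eq by blast+
    then obtain Q where "Q \<in> P" "singleton_le le {a} Q" "singleton_le le {b} Q"
      by (rule directed_pair[OF P])
    then show "\<exists>c\<in>D. le a c \<and> le b c" using P_eq by auto
  qed
  then have "is_sup (singletons A) (singleton_le le) P {supr A le D}"
    unfolding P_eq is_sup_singletons_iff by (rule is_sup_supr[OF assms])
  then show "\<exists>S. is_sup (singletons A) (singleton_le le) P S" ..
qed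

lemma
  assumes "dcpo Y le" "dsup_closed Y le C"
  shows dcpo_dsup_closed: "dcpo C le"
    and is_sup_dsup_closed: "directed C le D \<Longrightarrow> is_sup C le D s \<Longrightarrow> is_sup Y le D s"
proof -
  have CY: "C \<subseteq> Y" using assms(2) unfolding dsup_closed_def by blast
  have poset_C: "poset C le" using poset_subset[OF dcpo_poset[OF assms(1)] CY] .
  have sup_in_C: "is_sup Y le D (supr Y le D) \<and> is_sup C le D (supr Y le D)"
    if D: "directed C le D" for D
  proof -
    have DY: "directed Y le D" using directed_carrier_mono[OF D CY] .
    have sup: "is_sup Y le D (supr Y le D)" using is_sup_supr[OF assms(1) DY] .
    moreover have "supr Y le D \<in> C"
      using assms(2) DY sup directed_subset[OF D] unfolding dsup_closed_def by blast
    ultimately show ?thesis using is_sup_subset_carrier[OF sup _ CY] by blast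
  qed
  show "dcpo C le" unfolding dcpo_def using poset_C sup_in_C by blast
  assume "directed C le D" "is_sup C le D s"
  then show "is_sup Y le D s"
    using sup_in_C is_sup_unique[OF poset_C] by metis
qed

lemma mcp_restrict_codomain:
  "mcp X le Y leY f \<Longrightarrow> f ` X \<subseteq> C \<Longrightarrow> C \<subseteq> Y \<Longrightarrow> mcp X le C leY f"
  unfolding mcp_def using is_sup_subset_carrier by (metis image_subset_iff is_sup_def)

lemma mcp_dsup_closed_codomain:
  assumes "poset X le" "dcpo Y leY" "dsup_closed Y leY C" "mcp X le C leY f"
  shows "mcp X le Y leY f"
  unfolding mcp_def
proof (intro conjI allI impI)
  have CY: "C \<subseteq> Y" using assms(3) unfolding dsup_closed_def by blast
  then show "f ` X \<subseteq> Y" using mcp_into[OF assms(4)] by blast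
  have poset_C: "poset C leY" using poset_subset[OF dcpo_poset[OF assms(2)] CY] .
  fix D s assume "directed X le D \<and> is_sup X le D s"
  then show "is_sup Y leY (f ` D) (f s)"
    using is_sup_dsup_closed[OF assms(2,3) mcp_directed[OF assms(1) poset_C assms(4)]]
      mcp_is_sup[OF assms(4)] by blast
qed

lemma directed_completion_dense:
  fixes Y :: "'w set"
  assumes C: "directed_completion TYPE('w set) X le Y leY j" and poset_X: "poset X le"
  shows "dense Y leY (j ` X)"
proof -
  have dcpo_Y: "dcpo Y leY" and mcp_j: "mcp X le Y leY j"
    using directed_completionD[OF C] by blast+
  have jX: "j ` X \<subseteq> Y" using mcp_into[OF mcp_j] by blast
  define K where "K = dclosure Y leY (j ` X)"
  have KY: "K \<subseteq> Y" unfolding K_def by (rule dclosure_carrier[OF jX])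
  have K_closed: "dsup_closed Y leY K" unfolding K_def by (rule dsup_closed_dclosure[OF jX])
  have jK: "j ` X \<subseteq> K" unfolding K_def by (rule dclosure_subset)
  have "mcp X le (singletons K) (singleton_le leY) (\<lambda>x. {j x})"
    unfolding mcp_singletons_iff by (rule mcp_restrict_codomain[OF mcp_j jK KY])
  then obtain R where R: "mcp Y leY (singletons K) (singleton_le leY) R" "\<forall>x\<in>X. R (j x) = {j x}"
    using directed_completion_extend[OF C dcpo_singletons[OF dcpo_dsup_closed[OF dcpo_Y K_closed]]]
    by blast
  define r where "r y = the_elem (R y)" for y
  have R_eq: "R y = {r y}" and rK: "r y \<in> K" if "y \<in> Y" for y
    using mcp_into[OF R(1) that] unfolding r_def by (auto elim: singletonsE)
  have "mcp Y leY (singletons K) (singleton_le leY) (\<lambda>y. {r y})"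
    using R(1) by (subst mcp_cong[where g = R]) (simp_all add: R_eq)
  then have "mcp Y leY K leY r"
    by (simp only: mcp_singletons_iff)
  then have "mcp Y leY (singletons Y) (singleton_le leY) (\<lambda>y. {r y})"
    unfolding mcp_singletons_iff by (rule mcp_dsup_closed_codomain[OF dcpo_poset[OF dcpo_Y] dcpo_Y K_closed])
  moreover have "mcp Y leY (singletons Y) (singleton_le leY) (\<lambda>y. {y})"
    unfolding mcp_singletons_iff by (rule mcp_id)
  moreover have "{r (j x)} = {j x}" if "x \<in> X" for x
    using R(2) R_eq jX that by (metis image_subset_iff)
  ultimately have "{r y} = {y}" if "y \<in> Y" for y
    using directed_completion_unique[OF C poset_X dcpo_singletons[OF dcpo_Y], of "\<lambda>y. {r y}" "\<lambda>y. {y}"]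
      that by blast
  then have "Y \<subseteq> K" using rK by (metis singleton_inject subsetI)
  then show ?thesis unfolding dense_def K_def using dclosure_carrier[OF jX] by blast
qed

lemma is_sup_two_point: "P \<subseteq> {{}, UNIV} \<Longrightarrow> is_sup {{}, UNIV} (\<subseteq>) P (\<Union>P)"
proof -
  assume P: "P \<subseteq> {{}, UNIV}"
  have "\<Union>P \<in> {{}, UNIV}"
  proof (cases "UNIV \<in> P")
    case True
    then show ?thesis by blast
  next
    case False
    then have "\<Union>P = {}" using P by blast
    then show ?thesis by blast
  qed
  then show ?thesis unfolding is_sup_def by blast
qed

lemma dcpo_two_point: "dcpo {{}, UNIV} (\<subseteq>)"
  unfolding dcpo_def
proof (intro conjI allI impI)
  show "poset {{}, UNIV} (\<subseteq>)" unfolding poset_def by auto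
  fix P assume "directed {{}, UNIV} (\<subseteq>) P"
  then show "\<exists>s. is_sup {{}, UNIV} (\<subseteq>) P s" using is_sup_two_point[OF directed_subset] by blast
qed

lemma scott_closed_two_point_bot: "scott_closed {{}, UNIV} (\<subseteq>) {{}}"
  by (rule scott_closedI) (auto simp: is_sup_def)

lemma mcp_indicator:
  assumes "poset X le" "scott_closed X le C"
  shows "mcp X le {{}, UNIV} (\<subseteq>) (\<lambda>x. if x \<in> C then {} else UNIV)"
  unfolding mcp_def
proof (intro conjI allI impI)
  let ?\<chi> = "\<lambda>x. if x \<in> C then {} else UNIV"
  show "?\<chi> ` X \<subseteq> {{}, UNIV}" by auto
  fix D s assume "directed X le D \<and> is_sup X le D s"
  then have D: "directed X le D" and s: "is_sup X le D s" by blast+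
  have "?\<chi> s = \<Union>(?\<chi> ` D)"
  proof (cases "D \<subseteq> C")
    case True
    then have "s \<in> C" using scott_closed_dsupD[OF assms(2) D _ s] by blast
    then show ?thesis using True by auto
  next
    case False
    then obtain d where "d \<in> D" "d \<notin> C" by blast
    moreover have "d \<in> X" "s \<in> X" "le d s"
      using \<open>d \<in> D\<close> directed_subset[OF D] s unfolding is_sup_def by blast+
    ultimately have "s \<notin> C" using scott_closed_lowerD[OF assms(2)] by blast
    then show ?thesis using \<open>d \<in> D\<close> \<open>d \<notin> C\<close> by auto
  qed
  moreover have "is_sup {{}, UNIV} (\<subseteq>) (?\<chi> ` D) (\<Union>(?\<chi> ` D))"
    by (rule is_sup_two_point) auto
  ultimately show "is_sup {{}, UNIV} (\<subseteq>) (?\<chi> ` D) (?\<chi> s)"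
    by (rule ssubst)
qed

lemma directed_completion_hat_reflect:
  fixes Y :: "'w set"
  assumes C: "directed_completion TYPE('w set) X le Y leY j" and poset_X: "poset X le"
    and B: "directed X le B" and "a \<in> X" and ja: "j a \<in> hat Y leY (j ` B)"
  shows "a \<in> hat X le B"
proof -
  let ?\<chi> = "\<lambda>x. if x \<in> hat X le B then {} else UNIV :: 'w set"
  have "mcp X le {{}, UNIV} (\<subseteq>) ?\<chi>"
    using mcp_indicator[OF poset_X scott_closed_hat[OF directed_subset[OF B]]] .
  then obtain S where S: "mcp Y leY {{}, UNIV} (\<subseteq>) S" "\<forall>x\<in>X. S (j x) = ?\<chi> x"
    using directed_completion_extend[OF C dcpo_two_point] by blast
  have closed: "scott_closed Y leY {y \<in> Y. S y \<in> {{}}}"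
    using scott_closed_vimage[OF dcpo_poset[OF directed_completion_dcpo[OF C]]
        dcpo_poset[OF dcpo_two_point] S(1) scott_closed_two_point_bot] .
  have "j b \<in> {y \<in> Y. S y \<in> {{}}}" if "b \<in> B" for b
  proof -
    have "b \<in> X" "b \<in> hat X le B" using that directed_subset[OF B] hat_subset[of B X le] by blast+
    then show ?thesis using S(2) mcp_into[OF directed_completion_mcp[OF C]] by simp
  qed
  then have "j ` B \<subseteq> {y \<in> Y. S y \<in> {{}}}" by blast
  then have "j a \<in> {y \<in> Y. S y \<in> {{}}}"
    using hat_least[OF _ closed] ja by blast
  then have "?\<chi> a = {}" using S(2) \<open>a \<in> X\<close> by simp
  then show ?thesis by (metis UNIV_not_empty)
qed

lemma directed_completion_hat_iff:
  fixes Y :: "'w set"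
  assumes C: "directed_completion TYPE('w set) X le Y leY j" and poset_X: "poset X le"
    and B: "directed X le B" and "a \<in> X"
  shows "j a \<in> hat Y leY (j ` B) \<longleftrightarrow> a \<in> hat X le B"
proof
  show "a \<in> hat X le B" if "j a \<in> hat Y leY (j ` B)"
    by (rule directed_completion_hat_reflect[OF C poset_X B \<open>a \<in> X\<close> that])
  have "j ` hat X le B \<subseteq> hat Y leY (j ` B)"
    by (rule hat_image_subset[OF poset_X dcpo_poset[OF directed_completion_dcpo[OF C]]
          directed_completion_mcp[OF C] directed_subset[OF B]])
  then show "j a \<in> hat Y leY (j ` B)" if "a \<in> hat X le B" using that by blast
qed

lemma (in hat_directed_poset) directed_completion_dsups_image:
  fixes Y :: "'w set"
  assumes C: "directed_completion TYPE('w set) X le Y leY j"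
  shows "dsups Y leY (j ` X) = Y"
proof -
  interpret hat_embedding X le Y leY j
    using directed_completionD[OF C] directed_completion_dense[OF C poset_X]
      directed_completion_hat_reflect[OF C poset_X]
    by unfold_locales blast+
  show ?thesis by (rule dsups_image)
qed

subsection \<open>The completion by directed Scott-closed sets\<close>

definition hat_completion :: "'a set \<Rightarrow> ('a \<Rightarrow> 'a \<Rightarrow> bool) \<Rightarrow> 'a set set" where
  "hat_completion X le = {A. A \<subseteq> X \<and> A = hat X le A \<and> directed X le A}"

context hat_directed_poset
begin

lemma hat_completion_iff: "A \<in> hat_completion X le \<longleftrightarrow> scott_closed X le A \<and> directed X le A"
proof -
  have "A \<subseteq> X \<and> A = hat X le A \<longleftrightarrow> scott_closed X le A"
  proof
    assume "A \<subseteq> X \<and> A = hat X le A"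
    then show "scott_closed X le A" using scott_closed_hat[of A X le] by simp
  next
    assume "scott_closed X le A"
    then show "A \<subseteq> X \<and> A = hat X le A" using scott_closed_subset hat_scott_closed by metis
  qed
  then show ?thesis unfolding hat_completion_def by blast
qed

lemma hat_in_hat_completion: "directed X le B \<Longrightarrow> hat X le B \<in> hat_completion X le"
  unfolding hat_completion_iff using scott_closed_hat[OF directed_subset] directed_hat by blast

lemma is_sup_hat_completion:
  assumes B: "directed X le B" and "B \<subseteq> \<Union>\<A>" and "\<And>A. A \<in> \<A> \<Longrightarrow> A \<subseteq> hat X le B"
  shows "is_sup (hat_completion X le) (\<subseteq>) \<A> (hat X le B)"
  unfolding is_sup_def
proof (intro conjI ballI impI hat_in_hat_completion[OF B])
  show "A \<subseteq> hat X le B" if "A \<in> \<A>" for A using assms(3) that .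
  fix C assume "C \<in> hat_completion X le" "\<forall>A\<in>\<A>. A \<subseteq> C"
  then have "B \<subseteq> C" "scott_closed X le C" using assms(2) unfolding hat_completion_iff by blast+
  then show "hat X le B \<subseteq> C" by (rule hat_least)
qed

lemma dcpo_hat_completion: "dcpo (hat_completion X le) (\<subseteq>)"
  unfolding dcpo_def
proof (intro conjI allI impI)
  show "poset (hat_completion X le) (\<subseteq>)" unfolding poset_def by blast
  fix \<D> assume \<D>: "directed (hat_completion X le) (\<subseteq>) \<D>"
  have "directed X le (\<Union>\<D>)"
  proof (rule directed_Union[OF poset_X])
    show "\<D> \<noteq> {}" using directed_nonempty[OF \<D>] .
    show "directed X le A" if "A \<in> \<D>" for A
      using that directed_subset[OF \<D>] hat_completion_iff by blast
    show "\<exists>C\<in>\<D>. A \<subseteq> C \<and> B \<subseteq> C" if "A \<in> \<D>" "B \<in> \<D>" for A B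
      by (rule directed_pair[OF \<D> that]) blast
  qed
  then have "is_sup (hat_completion X le) (\<subseteq>) \<D> (hat X le (\<Union>\<D>))"
    by (rule is_sup_hat_completion) (use hat_subset[of "\<Union>\<D>" X le] in blast)+
  then show "\<exists>S. is_sup (hat_completion X le) (\<subseteq>) \<D> S" ..
qed

lemma down_in_hat_completion: "x \<in> X \<Longrightarrow> down X le x \<in> hat_completion X le"
  unfolding hat_completion_iff
  using scott_closed_down[OF poset_X] poset_refl[OF poset_X]
  by (auto intro!: directedI[OF poset_X] simp: down_def)

lemma down_mono: "x \<in> X \<Longrightarrow> y \<in> X \<Longrightarrow> le x y \<Longrightarrow> down X le x \<subseteq> down X le y"
  unfolding down_def using poset_trans[OF poset_X] by blast

lemma is_sup_down_image:
  assumes B: "directed X le B"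
  shows "is_sup (hat_completion X le) (\<subseteq>) (down X le ` B) (hat X le B)"
proof (rule is_sup_hat_completion[OF B])
  have BX: "B \<subseteq> X" using directed_subset[OF B] .
  show "B \<subseteq> \<Union>(down X le ` B)" using BX poset_refl[OF poset_X] unfolding down_def by blast
  fix A assume "A \<in> down X le ` B"
  then obtain b where "b \<in> B" "A = down X le b" by blast
  then show "A \<subseteq> hat X le B"
    using scott_closed_lowerD[OF scott_closed_hat[OF BX]] hat_subset[of B X le]
    unfolding down_def by blast
qed

lemma directed_down_image:
  assumes B: "directed X le B"
  shows "directed (hat_completion X le) (\<subseteq>) (down X le ` B)"
proof (rule directed_image[OF _ B])
  show "poset (hat_completion X le) (\<subseteq>)" unfolding poset_def by blast
  show "down X le ` B \<subseteq> hat_completion X le"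
    using down_in_hat_completion directed_subset[OF B] by blast
  show "down X le x \<subseteq> down X le y" if "x \<in> B" "y \<in> B" "le x y" for x y
    using down_mono that directed_subset[OF B] by blast
qed

lemma dense_down_image: "dense (hat_completion X le) (\<subseteq>) (down X le ` X)"
proof -
  have sub: "down X le ` X \<subseteq> hat_completion X le" using down_in_hat_completion by blast
  have closed: "dsup_closed (hat_completion X le) (\<subseteq>) (dclosure (hat_completion X le) (\<subseteq>) (down X le ` X))"
    by (rule dsup_closed_dclosure[OF sub])
  have "A \<in> dclosure (hat_completion X le) (\<subseteq>) (down X le ` X)" if "A \<in> hat_completion X le" for A
  proof -
    have A: "directed X le A" "scott_closed X le A" using that unfolding hat_completion_iff by blast+
    have "down X le ` A \<subseteq> dclosure (hat_completion X le) (\<subseteq>) (down X le ` X)"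
      using image_mono[OF scott_closed_subset[OF A(2)]] dclosure_subset by (rule subset_trans)
    then show ?thesis
      using closed directed_down_image[OF A(1)] is_sup_down_image[OF A(1)] hat_scott_closed[OF A(2)]
      unfolding dsup_closed_def by metis
  qed
  then show ?thesis
    unfolding dense_def using dclosure_carrier[OF sub] by blast
qed

lemma down_in_hat_iff:
  assumes B: "directed X le B" and "a \<in> X"
  shows "down X le a \<in> hat (hat_completion X le) (\<subseteq>) (down X le ` B) \<longleftrightarrow> a \<in> hat X le B"
proof
  have poset: "poset (hat_completion X le) (\<subseteq>)" unfolding poset_def by blast
  have sub: "down X le ` B \<subseteq> hat_completion X le"
    using down_in_hat_completion directed_subset[OF B] by blast
  assume "down X le a \<in> hat (hat_completion X le) (\<subseteq>) (down X le ` B)"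
  then have "down X le a \<subseteq> hat X le B"
    using hat_subset_down[OF poset sub is_sup_down_image[OF B]] unfolding down_def by blast
  then show "a \<in> hat X le B" using \<open>a \<in> X\<close> poset_refl[OF poset_X] unfolding down_def by blast
next
  have poset: "poset (hat_completion X le) (\<subseteq>)" unfolding poset_def by blast
  assume "a \<in> hat X le B"
  then have "down X le a \<subseteq> hat X le B"
    using scott_closed_lowerD[OF scott_closed_hat[OF directed_subset[OF B]]] unfolding down_def by blast
  then show "down X le a \<in> hat (hat_completion X le) (\<subseteq>) (down X le ` B)"
    using in_hat_if_le_sup[OF poset directed_down_image[OF B] is_sup_down_image[OF B]]
      down_in_hat_completion[OF \<open>a \<in> X\<close>] by blast
qed

lemma directed_completion_hat_completion:
  "directed_completion TYPE('z) X le (hat_completion X le) (\<subseteq>) (down X le)"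
  using directed_completion_if_dense_hat_iff[OF dcpo_hat_completion _ dense_down_image down_in_hat_iff]
    down_in_hat_completion by blast

end

theorem mainTheorem4:
  fixes X :: "'a set" and le :: "'a \<Rightarrow> 'a \<Rightarrow> bool"
    and Xb :: "'b set" and leb :: "'b \<Rightarrow> 'b \<Rightarrow> bool" and \<iota> :: "'a \<Rightarrow> 'b"
  assumes "poset X le"
    and "\<forall>D. directed X le D \<longrightarrow> directed X le (hat X le D)"
    and "directed_completion TYPE('b set) X le Xb leb \<iota>"
  shows "dsups Xb leb (\<iota> ` X) = Xb \<and>
         directed_completion TYPE('z)
           X le {A. A \<subseteq> X \<and> A = hat X le A \<and> directed X le A} (\<subseteq>) (\<lambda>x. down X le x) \<and>
         (\<forall>(Y :: 'w set) leY j. dcpo Y leY \<and> j ` X \<subseteq> Y \<longrightarrow>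
           ((directed_completion TYPE('w set) X le Y leY j \<longrightarrow>
               dense Y leY (j ` X) \<and>
               (\<forall>B a. directed X le B \<and> a \<in> X \<longrightarrow>
                  (j a \<in> hat Y leY (j ` B) \<longleftrightarrow> a \<in> hat X le B)))
            \<and>
            (dense Y leY (j ` X) \<and>
               (\<forall>B a. directed X le B \<and> a \<in> X \<longrightarrow>
                  (j a \<in> hat Y leY (j ` B) \<longleftrightarrow> a \<in> hat X le B))
             \<longrightarrow> directed_completion TYPE('z) X le Y leY j)))"
proof -
  interpret hat_directed_poset X le
    using assms(1,2) by unfold_locales blast+
  show ?thesis
  proof (intro conjI allI impI)
    show "dsups Xb leb (\<iota> ` X) = Xb"
      by (rule directed_completion_dsups_image[OF assms(3)])
    show "directed_completion TYPE('z) X le {A. A \<subseteq> X \<and> A = hat X le A \<and> directed X le A} (\<subseteq>) (down X le)"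
      using directed_completion_hat_completion unfolding hat_completion_def .
  qed (simp_all add: directed_completion_dense[OF _ poset_X] directed_completion_hat_iff[OF _ poset_X]
      directed_completion_if_dense_hat_iff)
qed

end
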